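(* For integers $m,n\ge 0$ let $p_m(n)=\prod_{1\le i\le j\le m-1}\frac{2n+i+j}{i+j}$. Then $p_m(0)=1$ and $p_m(1)=C_m$ for all $m\ge 0$, and for all $m\ge 0$, $n\ge 2$, $$p_m(n-1)p_{m+2}(n-1)-p_{m+1}(n-1)^2=p_m(n)\,p_{m+2}(n-2).$$ Moreover, these numbers are uniquely determined by this recursion and these initial values: if $(q_m(n))_{m,n\ge 0}$ is any family of complex numbers with $q_m(0)=1$, $q_m(1)=C_m$ for all $m\ge0$ and $q_m(n-1)q_{m+2}(n-1)-q_{m+1}(n-1)^2=q_m(n)\,q_{m+2}(n-2)$ for all $m\ge 0$, $n\ge 2$, then $q_m(n)=p_m(n)$ for all $m,n\ge 0$.
   Context: $C_m=\frac{1}{m+1}\binom{2m}{m}$ denotes the $m$-th Catalan number. Empty products equal $1$. It is known that $p_m(n)=\det(C_{m+i+j})_{i,j=0}^{n-1}$ for all integers $m,n\ge 0$. *)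

theory Defs
  imports Complex_Main
begin

definition catalan :: "nat \<Rightarrow> complex" where
  "catalan m = of_nat ((2*m) choose m) / of_nat (m+1)"

text \<open>p_m(n) = product over 1 <= i <= j <= m-1 of (2n+i+j)/(i+j).
  The condition j <= m-1 is written j+1 <= m to avoid truncated subtraction
  (for m = 0 the product is empty).\<close>
definition p :: "nat \<Rightarrow> nat \<Rightarrow> complex" where
  "p m n = (\<Prod>(i,j)\<in>{(i,j). 1 \<le> i \<and> i \<le> j \<and> j + 1 \<le> m}.
              of_nat (2*n + i + j) / of_nat (i + j))"

end

theory Submission
  imports Defs
begin

text \<open>Passing from column m to column m + 1 multiplies p by a quotient of two rising factorials.
  Hence p (m+1) n ^ 2 / (p m n * p (m+2) n) is an explicit rational function of m and n, and so,
  by induction on m, is p m (n+1) * p (m+2) (n-1) / (p m n * p (m+2) n).  With these two ratios the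
  recurrence becomes the polynomial identity
  (2n+2m+1)(2n+2m+2) - 2(2n+m+1)(2m+1) = 2n(2n+1).
  Uniqueness holds because p never vanishes, so the recurrence determines row n from the rows
  n - 1 and n - 2.\<close>

lemma pochhammer_add_2:
  "pochhammer z (n + 2) = pochhammer z n * ((z + of_nat n) * (z + of_nat n + 1))"
  by (simp add: numeral_2_eq_2 pochhammer_Suc algebra_simps)

lemma pochhammer_shift_1:
  "pochhammer (z + 1) (Suc n) * z = pochhammer z n * ((z + of_nat n) * (z + of_nat n + 1))"
proof -
  have "pochhammer (z + 1) (Suc n) * z = pochhammer z (n + 2)"
    by (simp add: pochhammer_rec numeral_2_eq_2 mult.commute)
  then show ?thesis
    by (simp only: pochhammer_add_2)
qed

lemma pochhammer_shift_2:
  "pochhammer (z + 2) n * (z * (z + 1)) = pochhammer z n * ((z + of_nat n) * (z + of_nat n + 1))"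
proof -
  have "pochhammer (z + 2) n * (z * (z + 1)) = z * ((z + 1) * pochhammer (z + 1 + 1) n)"
    by (simp add: add.assoc mult_ac)
  also have "\<dots> = pochhammer z (n + 2)"
    by (simp only: pochhammer_rec numeral_2_eq_2 add_Suc_right add_0_right)
  also have "\<dots> = pochhammer z n * ((z + of_nat n) * (z + of_nat n + 1))"
    by (rule pochhammer_add_2)
  finally show ?thesis .
qed

lemma pochhammer_of_nat_nonzero:
  "0 < k \<Longrightarrow> pochhammer (of_nat k) n \<noteq> (0 :: 'a :: {comm_semiring_1, semiring_char_0})"
  unfolding pochhammer_of_nat of_nat_eq_0_iff using pochhammer_pos[of k n] by simp

lemma central_binomial_Suc: "(2 * Suc m choose Suc m) * Suc m = 2 * (2*m + 1) * (2*m choose m)"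
proof -
  have "(2 * Suc m choose Suc m) * Suc m = 2 * Suc m * (Suc (2*m) choose m)"
    using Suc_times_binomial_eq[of "Suc (2*m)" m] by simp
  also have "Suc (2*m) choose m = Suc (2*m) choose Suc m"
    using binomial_symmetric[of m "Suc (2*m)"] by (simp add: Suc_diff_le)
  also have "2 * Suc m * (Suc (2*m) choose Suc m) = 2 * ((Suc (2*m) choose Suc m) * Suc m)"
    by simp
  also have "(Suc (2*m) choose Suc m) * Suc m = Suc (2*m) * (2*m choose m)"
    using Suc_times_binomial_eq[of "2*m" m] by simp
  finally show ?thesis by simp
qed

lemma catalan_Suc: "catalan (Suc m) * of_nat (m + 2) = catalan m * of_nat (2 * (2*m + 1))"
proof -
  have "catalan (Suc m) * of_nat (m + 2) = of_nat (2 * Suc m choose Suc m)"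
    unfolding catalan_def by (simp del: of_nat_Suc of_nat_add)
  also have "\<dots> = catalan m * of_nat (2 * (2*m + 1))"
  proof -
    have "of_nat (2 * Suc m choose Suc m) * of_nat (Suc m)
        = of_nat (2*m choose m) * (of_nat (2 * (2*m + 1)) :: complex)"
      using arg_cong[OF central_binomial_Suc[of m], of "of_nat :: nat \<Rightarrow> complex"]
      by (simp only: of_nat_mult mult_ac)
    also have "\<dots> = catalan m * of_nat (2 * (2*m + 1)) * of_nat (Suc m)"
      unfolding catalan_def by (simp del: of_nat_Suc of_nat_add of_nat_mult)
    finally show ?thesis
      by (metis mult_cancel_right of_nat_eq_0_iff nat.distinct(1))
  qed
  finally show ?thesis .
qed

lemma p_zero_left: "p 0 n = 1"
  by (simp add: p_def)

lemma p_zero_right: "p m 0 = 1"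
  unfolding p_def by (rule prod.neutral) (auto simp del: of_nat_add)

lemma p_nonzero: "p m n \<noteq> 0"
proof -
  have "finite {(i, j). 1 \<le> i \<and> i \<le> j \<and> j + 1 \<le> m}"
    by (rule finite_subset[of _ "{..m} \<times> {..m}"]) auto
  moreover have "of_nat (2*n + i + j) / of_nat (i + j) \<noteq> (0::complex)" if "1 \<le> i" for i j
    using that by (simp only: divide_eq_0_iff of_nat_eq_0_iff) simp
  ultimately show ?thesis
    unfolding p_def
    by (auto simp only: prod_zero_iff case_prod_beta mem_Collect_eq fst_conv snd_conv)
qed

lemma p_Suc_left:
  "p (Suc m) n = p m n * pochhammer (of_nat (2*n + m + 1)) m / pochhammer (of_nat (m + 1)) m"
proof -
  let ?S = "\<lambda>m. {(i, j). 1 \<le> i \<and> i \<le> j \<and> j + 1 \<le> (m::nat)}"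
  let ?f = "\<lambda>(i, j). (of_nat (2*n + i + j) / of_nat (i + j) :: complex)"
  have split: "?S (Suc m) = ?S m \<union> (\<lambda>i. (i, m)) ` {1..m}"
    by (auto simp: image_iff)
  have "finite (?S m)"
    by (rule finite_subset[of _ "{..m} \<times> {..m}"]) auto
  then have "p (Suc m) n = p m n * prod ?f ((\<lambda>i. (i, m)) ` {1..m})"
    unfolding p_def split by (rule prod.union_disjoint) auto
  also have "prod ?f ((\<lambda>i. (i, m)) ` {1..m})
      = (\<Prod>i<m. of_nat (2*n + m + 1 + i) / of_nat (m + 1 + i))"
    by (subst prod.reindex) (auto simp: inj_on_def prod.atLeast1_atMost_eq add_ac)
  also have "\<dots> = pochhammer (of_nat (2*n + m + 1)) m / pochhammer (of_nat (m + 1)) m"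
    by (simp add: pochhammer_prod prod_dividef atLeast0LessThan add_ac)
  finally show ?thesis by simp
qed

lemma p_one_right: "p m 1 = catalan m"
proof (induction m)
  case 0
  then show ?case by (simp add: p_zero_left catalan_def)
next
  case (Suc m)
  have "p (Suc m) 1
      = catalan m * (pochhammer (of_nat (m + 3)) m / pochhammer (of_nat (m + 1)) m)"
    using Suc by (simp add: p_Suc_left add_ac)
  also have "pochhammer (of_nat (m + 3)) m / pochhammer (of_nat (m + 1)) m
      = of_nat (2 * (2*m + 1)) / (of_nat (m + 2) :: complex)"
  proof -
    have "pochhammer (of_nat (m + 3)) m * (of_nat (m + 1) * of_nat (m + 2))
        = pochhammer (of_nat (m + 1)) m * (of_nat (2 * (2*m + 1)) * (of_nat (m + 1) :: complex))"
      using pochhammer_shift_2[of "of_nat (m + 1) :: complex" m] by (simp add: algebra_simps)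
    then show ?thesis
      using pochhammer_of_nat_nonzero[of "m + 1" m]
      by (simp add: field_simps del: of_nat_add of_nat_Suc of_nat_mult)
  qed
  also have "catalan m * (of_nat (2 * (2*m + 1)) / of_nat (m + 2)) = catalan (Suc m)"
    using catalan_Suc[of m] by (simp add: field_simps del: of_nat_add of_nat_Suc of_nat_mult)
  finally show ?case .
qed

lemma p_Suc_left_mult:
  "p (Suc m) n * pochhammer (of_nat (m + 1)) m = p m n * pochhammer (of_nat (2*n + m + 1)) m"
  using pochhammer_of_nat_nonzero[of "m + 1" m, where 'a = complex] by (simp add: p_Suc_left)

lemma p_Suc_square:
  "p (Suc m) n ^ 2
      * ((2 * of_nat n + 2 * of_nat m + 1) * (2 * of_nat n + 2 * of_nat m + 2) * (of_nat m + 1))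
   = p m n * p (Suc (Suc m)) n
      * ((2 * of_nat n + of_nat m + 1) * (2 * of_nat m + 1) * (2 * of_nat m + 2))"
proof -
  define A B A' B' where "A = pochhammer (of_nat (2*n + m + 1) :: complex) m"
    and "B = pochhammer (of_nat (m + 1) :: complex) m"
    and "A' = pochhammer (of_nat (2*n + m + 2) :: complex) (Suc m)"
    and "B' = pochhammer (of_nat (m + 2) :: complex) (Suc m)"
  have e1: "p (Suc m) n * B = p m n * A"
    unfolding A_def B_def by (rule p_Suc_left_mult)
  have e2: "p (Suc (Suc m)) n * B' = p (Suc m) n * A'"
    unfolding A'_def B'_def using p_Suc_left_mult[of "Suc m" n] by (simp add: add_ac)
  have e3: "A' * (2 * of_nat n + of_nat m + 1)
      = A * ((2 * of_nat n + 2 * of_nat m + 1) * (2 * of_nat n + 2 * of_nat m + 2))"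
    unfolding A_def A'_def using pochhammer_shift_1[of "of_nat (2*n + m + 1) :: complex" m]
    by (simp add: algebra_simps)
  have e4: "B' * (of_nat m + 1) = B * ((2 * of_nat m + 1) * (2 * of_nat m + 2))"
    unfolding B_def B'_def using pochhammer_shift_1[of "of_nat (m + 1) :: complex" m]
    by (simp add: algebra_simps)
  have "A * B * B' \<noteq> 0"
    unfolding A_def B_def B'_def
    by (intro no_zero_divisors pochhammer_of_nat_nonzero) simp_all
  moreover have "(p (Suc m) n ^ 2
        * ((2 * of_nat n + 2 * of_nat m + 1) * (2 * of_nat n + 2 * of_nat m + 2) * (of_nat m + 1))
      - p m n * p (Suc (Suc m)) n
        * ((2 * of_nat n + of_nat m + 1) * (2 * of_nat m + 1) * (2 * of_nat m + 2)))
      * (A * B * B') = 0"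
    using e1 e2 e3 e4 by algebra
  ultimately show ?thesis
    by simp
qed

lemma p_two_left: "p 2 n = of_nat n + 1"
  by (simp add: numeral_2_eq_2 p_Suc_left p_zero_left)

lemma p_shift_diagonal:
  "p m (n + 2) * p (m + 2) n * ((2 * of_nat n + 2 * of_nat m + 3) * (2 * of_nat n + 2 * of_nat m + 4))
   = p m (n + 1) * p (m + 2) (n + 1) * ((2 * of_nat n + 2) * (2 * of_nat n + 3))"
proof (induction m)
  case 0
  show ?case
    unfolding add_0 p_zero_left p_two_left by (simp add: algebra_simps)
next
  case (Suc m)
  define B B' where "B = pochhammer (of_nat (m + 1) :: complex) m"
    and "B' = pochhammer (of_nat (m + 3) :: complex) (m + 2)"
  define A1 A2 A3 A4 where "A1 = pochhammer (of_nat (2*n + m + 5) :: complex) m"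
    and "A2 = pochhammer (of_nat (2*n + m + 3) :: complex) (m + 2)"
    and "A3 = pochhammer (of_nat (2*n + m + 3) :: complex) m"
    and "A4 = pochhammer (of_nat (2*n + m + 5) :: complex) (m + 2)"
  have a: "p (Suc m) (n + 2) * B = p m (n + 2) * A1"
    unfolding A1_def B_def using p_Suc_left_mult[of m "n + 2"] by (simp add: add_ac)
  have b: "p (Suc m + 2) n * B' = p (m + 2) n * A2"
    unfolding A2_def B'_def using p_Suc_left_mult[of "m + 2" n] by (simp add: add_ac)
  have c: "p (Suc m) (n + 1) * B = p m (n + 1) * A3"
    unfolding A3_def B_def using p_Suc_left_mult[of m "n + 1"] by (simp add: add_ac)
  have d: "p (Suc m + 2) (n + 1) * B' = p (m + 2) (n + 1) * A4"
    unfolding A4_def B'_def using p_Suc_left_mult[of "m + 2" "n + 1"] by (simp add: add_ac)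
  have r2: "A2 = A3 * ((2 * of_nat n + 2 * of_nat m + 3) * (2 * of_nat n + 2 * of_nat m + 4))"
    unfolding A2_def A3_def pochhammer_add_2 by (simp add: algebra_simps)
  have r4: "A4 = A1 * ((2 * of_nat n + 2 * of_nat m + 5) * (2 * of_nat n + 2 * of_nat m + 6))"
    unfolding A4_def A1_def pochhammer_add_2 by (simp add: algebra_simps)
  have nz: "B * B' \<noteq> 0"
    unfolding B_def B'_def
    by (intro no_zero_divisors pochhammer_of_nat_nonzero) simp_all
  have "p (Suc m) (n + 2) * p (Suc m + 2) n
        * ((2 * of_nat n + 2 * of_nat (Suc m) + 3) * (2 * of_nat n + 2 * of_nat (Suc m) + 4)) * (B * B')
      = (p (Suc m) (n + 2) * B) * (p (Suc m + 2) n * B')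
        * ((2 * of_nat n + 2 * of_nat m + 5) * (2 * of_nat n + 2 * of_nat m + 6))"
    by (simp add: algebra_simps)
  also have "\<dots> = p m (n + 2) * p (m + 2) n
        * ((2 * of_nat n + 2 * of_nat m + 3) * (2 * of_nat n + 2 * of_nat m + 4))
        * (A1 * A3 * ((2 * of_nat n + 2 * of_nat m + 5) * (2 * of_nat n + 2 * of_nat m + 6)))"
    unfolding a b r2 by (simp only: mult_ac)
  also have "\<dots> = p m (n + 1) * p (m + 2) (n + 1) * ((2 * of_nat n + 2) * (2 * of_nat n + 3))
        * (A1 * A3 * ((2 * of_nat n + 2 * of_nat m + 5) * (2 * of_nat n + 2 * of_nat m + 6)))"
    unfolding Suc.IH ..
  also have "\<dots> = (p (Suc m) (n + 1) * B) * (p (Suc m + 2) (n + 1) * B')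
        * ((2 * of_nat n + 2) * (2 * of_nat n + 3))"
    unfolding c d r4 by (simp only: mult_ac)
  finally show ?case
    using nz by (simp add: mult_ac)
qed

lemma p_recurrence:
  "p m (n + 1) * p (m + 2) (n + 1) - p (m + 1) (n + 1) ^ 2 = p m (n + 2) * p (m + 2) n"
proof -
  have square: "p (m + 1) (n + 1) ^ 2
        * ((2 * of_nat n + 2 * of_nat m + 3) * (2 * of_nat n + 2 * of_nat m + 4) * (of_nat m + 1))
      = p m (n + 1) * p (m + 2) (n + 1)
        * ((2 * of_nat n + of_nat m + 3) * (2 * of_nat m + 1) * (2 * of_nat m + 2))"
    using p_Suc_square[of m "n + 1"] by (simp add: algebra_simps)
  have "of_nat ((2*n + 2*m + 3) * (2*n + 2*m + 4) * (m + 1)) \<noteq> (0 :: complex)"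
    by (simp only: of_nat_eq_0_iff) simp
  then have nz: "(2 * of_nat n + 2 * of_nat m + 3) * (2 * of_nat n + 2 * of_nat m + 4) * (of_nat m + 1)
      \<noteq> (0 :: complex)"
    by (simp add: algebra_simps)
  have "(p m (n + 1) * p (m + 2) (n + 1) - p (m + 1) (n + 1) ^ 2 - p m (n + 2) * p (m + 2) n)
      * ((2 * of_nat n + 2 * of_nat m + 3) * (2 * of_nat n + 2 * of_nat m + 4) * (of_nat m + 1)) = 0"
    using square p_shift_diagonal[of m n] by algebra
  with nz show ?thesis
    by simp
qed

lemma p_unique:
  fixes q :: "nat \<Rightarrow> nat \<Rightarrow> complex"
  assumes "\<And>m. q m 0 = 1" and "\<And>m. q m 1 = catalan m"
    and recurrence: "\<And>m n. q m (n + 1) * q (m + 2) (n + 1) - q (m + 1) (n + 1) ^ 2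
      = q m (n + 2) * q (m + 2) n"
  shows "q m n = p m n"
proof -
  have "\<forall>m. q m n = p m n \<and> q m (n + 1) = p m (n + 1)"
  proof (induction n)
    case 0
    then show ?case
      using assms(1,2) p_zero_right p_one_right by simp
  next
    case (Suc n)
    have "q m (n + 2) = p m (n + 2)" for m
    proof -
      have "q m (n + 2) * p (m + 2) n = q m (n + 1) * q (m + 2) (n + 1) - q (m + 1) (n + 1) ^ 2"
        using recurrence[of m n] Suc.IH by simp
      also have "\<dots> = p m (n + 1) * p (m + 2) (n + 1) - p (m + 1) (n + 1) ^ 2"
        using Suc.IH by simp
      also have "\<dots> = p m (n + 2) * p (m + 2) n"
        by (rule p_recurrence)
      finally have "q m (n + 2) * p (m + 2) n = p m (n + 2) * p (m + 2) n" .
      then show ?thesis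
        using p_nonzero[of "m + 2" n] by simp
    qed
    with Suc.IH show ?case
      by simp
  qed
  then show ?thesis
    by blast
qed

theorem lemma2:
  shows "(\<forall>m. p m 0 = 1) \<and> (\<forall>m. p m 1 = catalan m)
    \<and> (\<forall>m n. 2 \<le> n \<longrightarrow>
          p m (n-1) * p (m+2) (n-1) - p (m+1) (n-1) ^ 2 = p m n * p (m+2) (n-2))
    \<and> (\<forall>q :: nat \<Rightarrow> nat \<Rightarrow> complex.
          (\<forall>m. q m 0 = 1) \<and> (\<forall>m. q m 1 = catalan m)
          \<and> (\<forall>m n. 2 \<le> n \<longrightarrow>
               q m (n-1) * q (m+2) (n-1) - q (m+1) (n-1) ^ 2 = q m n * q (m+2) (n-2))
          \<longrightarrow> (\<forall>m n. q m n = p m n))"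
proof (intro conjI allI impI)
  fix m n :: nat
  assume "2 \<le> n"
  then obtain k where "n = k + 2"
    by (metis add.commute le_Suc_ex)
  then show "p m (n-1) * p (m+2) (n-1) - p (m+1) (n-1) ^ 2 = p m n * p (m+2) (n-2)"
    using p_recurrence[of m k] by simp
next
  fix q :: "nat \<Rightarrow> nat \<Rightarrow> complex" and m n
  assume q: "(\<forall>m. q m 0 = 1) \<and> (\<forall>m. q m 1 = catalan m)
    \<and> (\<forall>m n. 2 \<le> n \<longrightarrow> q m (n-1) * q (m+2) (n-1) - q (m+1) (n-1) ^ 2 = q m n * q (m+2) (n-2))"
  then have "\<And>m. q m 0 = 1" and "\<And>m. q m 1 = catalan m"
    by blast+
  moreover have "q j (k + 1) * q (j + 2) (k + 1) - q (j + 1) (k + 1) ^ 2 = q j (k + 2) * q (j + 2) k"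
    for j k
    using q[THEN conjunct2, THEN conjunct2, rule_format, of "k + 2" j] by simp
  ultimately show "q m n = p m n"
    by (rule p_unique)
qed (simp_all only: p_zero_right p_one_right)

end
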